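(* Let $k\ge 2$ be an integer. Assume that for every integer $d$ with $2\le d\le k$, every $\mathcal{T}\in\mathrm{Sym}(2,d)$ has a symmetric best rank one approximation. Then for every integer $n\ge 3$ and every integer $d$ with $2\le d\le k$, every $\mathcal{T}\in\mathrm{Sym}(n,d)$ has a symmetric best rank one approximation.
   Context: $\mathrm{Sym}(n,d)$ is the space of real tensors $[t_{i_1,\ldots,i_d}]_{i_1,\ldots,i_d=1}^n$ invariant under all permutations of indices. Norm $\|\mathcal{T}\|=\sqrt{\sum t_{i_1,\ldots,i_d}^2}$; $\mathrm{S}^{n-1}$ is the Euclidean unit sphere in $\mathbb{R}^n$. A best rank one approximation of $\mathcal{T}$ is a tensor $a\,\mathbf{u}_1\otimes\cdots\otimes\mathbf{u}_d$ ($a\in\mathbb{R}$, $\mathbf{u}_j\in\mathrm{S}^{n-1}$) minimizing $\|\mathcal{T}-s\,\mathbf{x}_1\otimes\cdots\otimes\mathbf{x}_d\|$ over $s\in\mathbb{R}$, $\mathbf{x}_j\in\mathrm{S}^{n-1}$; it is symmetric if it is of the form $b\,\mathbf{u}\otimes\cdots\otimes\mathbf{u}$. *)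

theory Defs
  imports Complex_Main "HOL-Combinatorics.Permutations"
begin

text \<open>A tensor of order d over R^n is a function on index lists xs of length d
  with entries in {0..<n} (values outside this index set are irrelevant).\<close>

definition idx :: "nat \<Rightarrow> nat \<Rightarrow> nat list set" where
  "idx n d = {xs. length xs = d \<and> set xs \<subseteq> {..<n}}"

definition sym_tensor :: "nat \<Rightarrow> nat \<Rightarrow> (nat list \<Rightarrow> real) \<Rightarrow> bool" where
  "sym_tensor n d T = (\<forall>xs\<in>idx n d. \<forall>p. p permutes {..<d} \<longrightarrow> T (permute_list p xs) = T xs)"

definition tnorm :: "nat \<Rightarrow> nat \<Rightarrow> (nat list \<Rightarrow> real) \<Rightarrow> real" where
  "tnorm n d T = sqrt (\<Sum>xs\<in>idx n d. (T xs)\<^sup>2)"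

definition unit_vec :: "nat \<Rightarrow> (nat \<Rightarrow> real) \<Rightarrow> bool" where
  "unit_vec n u = ((\<Sum>i<n. (u i)\<^sup>2) = 1)"

definition rank_one :: "nat \<Rightarrow> real \<Rightarrow> (nat \<Rightarrow> nat \<Rightarrow> real) \<Rightarrow> nat list \<Rightarrow> real" where
  "rank_one d s x = (\<lambda>xs. s * (\<Prod>j<d. x j (xs ! j)))"

definition best_rank_one ::
  "nat \<Rightarrow> nat \<Rightarrow> (nat list \<Rightarrow> real) \<Rightarrow> real \<Rightarrow> (nat \<Rightarrow> nat \<Rightarrow> real) \<Rightarrow> bool" where
  "best_rank_one n d T a u =
     ((\<forall>j<d. unit_vec n (u j)) \<and>
      (\<forall>s x. (\<forall>j<d. unit_vec n (x j)) \<longrightarrow>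
         tnorm n d (\<lambda>xs. T xs - rank_one d a u xs) \<le> tnorm n d (\<lambda>xs. T xs - rank_one d s x xs)))"

definition has_sym_best_rank_one :: "nat \<Rightarrow> nat \<Rightarrow> (nat list \<Rightarrow> real) \<Rightarrow> bool" where
  "has_sym_best_rank_one n d T = (\<exists>b v. unit_vec n v \<and> best_rank_one n d T b (\<lambda>_. v))"

end

theory Submission
  imports Defs "HOL-Analysis.Analysis"
begin

text \<open>
  For unit vectors x_1, ..., x_d the squared error of the approximation s x_1 \<otimes> ... \<otimes> x_d
  is ||T||^2 - 2 s T(x_1,...,x_d) + s^2. Hence best rank one approximations are the maximisers of
  |T(x_1,...,x_d)| over unit vectors, and a symmetric one exists as soon as the maximum of
  |T(v,...,v)| over the sphere, which is attained by compactness, dominates every |T(x_1,...,x_d)|.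
  This is shown by induction on d: contracting the last slot with x_d gives a symmetric tensor of
  order d-1, for which the induction hypothesis replaces x_1, ..., x_(d-1) by a single vector w.
  The resulting tuple takes only the two values w and x_d, so restricting T to their span yields a
  tensor in Sym(2,d), where the hypothesis provides a dominating diagonal argument.
\<close>

definition tensor_form :: "nat \<Rightarrow> nat \<Rightarrow> (nat list \<Rightarrow> real) \<Rightarrow> (nat \<Rightarrow> nat \<Rightarrow> real) \<Rightarrow> real" where
  "tensor_form n d T x = (\<Sum>xs\<in>idx n d. T xs * (\<Prod>j<d. x j (xs!j)))"

text \<open>Symmetry of the multilinear form rather than of the coefficients: unlike \<open>sym_tensor\<close>,
  it passes directly to contractions.\<close>

definition form_symmetric :: "nat \<Rightarrow> nat \<Rightarrow> (nat list \<Rightarrow> real) \<Rightarrow> bool" where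
  "form_symmetric n d T = (\<forall>x p. p permutes {..<d} \<longrightarrow> tensor_form n d T (x \<circ> p) = tensor_form n d T x)"

definition contract :: "nat \<Rightarrow> (nat list \<Rightarrow> real) \<Rightarrow> (nat \<Rightarrow> real) \<Rightarrow> nat list \<Rightarrow> real" where
  "contract n T y zs = (\<Sum>i<n. T (zs @ [i]) * y i)"

lemma finite_idx [simp]: "finite (idx n d)"
proof -
  have "idx n d = {xs. set xs \<subseteq> {..<n} \<and> length xs = d}" by (auto simp: idx_def)
  then show ?thesis using finite_lists_length_eq[of "{..<n}" d] by simp
qed

lemma idx_nth_less: "xs \<in> idx n d \<Longrightarrow> j < d \<Longrightarrow> xs ! j < n"
  using nth_mem by (fastforce simp: idx_def)

lemma idx_Suc: "idx n (Suc d) = (\<lambda>(zs, i). zs @ [i]) ` (idx n d \<times> {..<n})"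
proof (rule set_eqI, rule iffI)
  fix xs assume "xs \<in> idx n (Suc d)"
  then have l: "length xs = Suc d" "set xs \<subseteq> {..<n}" by (auto simp: idx_def)
  then obtain zs i where "xs = zs @ [i]" by (metis length_Suc_conv_rev)
  with l show "xs \<in> (\<lambda>(zs, i). zs @ [i]) ` (idx n d \<times> {..<n})"
    by (auto simp: idx_def image_iff)
qed (auto simp: idx_def)

lemma sum_idx_Suc: "(\<Sum>xs\<in>idx n (Suc d). h xs) = (\<Sum>zs\<in>idx n d. \<Sum>i<n. h (zs @ [i]))"
proof -
  have "inj_on (\<lambda>(zs, i). zs @ [i]) (idx n d \<times> {..<n})" by (auto simp: inj_on_def)
  then have "(\<Sum>xs\<in>idx n (Suc d). h xs) = (\<Sum>(zs, i)\<in>idx n d \<times> {..<n}. h (zs @ [i]))"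
    unfolding idx_Suc by (simp add: sum.reindex split_def)
  then show ?thesis by (simp add: sum.cartesian_product)
qed

lemma prod_lessThan_Suc_append:
  "length zs = d \<Longrightarrow> (\<Prod>j<Suc d. g j ((zs @ [i]) ! j)) = (\<Prod>j<d. g j (zs ! j)) * g d i"
  by (auto simp: nth_append intro!: prod.cong)

lemma sum_idx_prod: "(\<Sum>xs\<in>idx n d. \<Prod>j<d. (g :: nat \<Rightarrow> nat \<Rightarrow> real) j (xs ! j)) = (\<Prod>j<d. \<Sum>i<n. g j i)"
proof (induction d)
  case 0
  have "idx n 0 = {[]}" by (auto simp: idx_def)
  then show ?case by simp
next
  case (Suc d)
  have "(\<Sum>xs\<in>idx n (Suc d). \<Prod>j<Suc d. g j (xs ! j))
      = (\<Sum>zs\<in>idx n d. \<Sum>i<n. (\<Prod>j<d. g j (zs ! j)) * g d i)"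
    unfolding sum_idx_Suc by (intro sum.cong refl prod_lessThan_Suc_append) (simp add: idx_def)
  also have "\<dots> = (\<Sum>zs\<in>idx n d. \<Prod>j<d. g j (zs ! j)) * (\<Sum>i<n. g d i)"
    by (simp add: sum_product)
  finally show ?case using Suc by simp
qed

lemma tensor_form_cong:
  "(\<And>j i. j < d \<Longrightarrow> i < n \<Longrightarrow> x j i = x' j i) \<Longrightarrow> tensor_form n d T x = tensor_form n d T x'"
  unfolding tensor_form_def by (intro sum.cong refl arg_cong[where f = "\<lambda>a. _ * a"] prod.cong)
    (auto dest: idx_nth_less)

lemma tensor_form_scale: "tensor_form n d T (\<lambda>j i. a j * x j i) = (\<Prod>j<d. a j) * tensor_form n d T x"
  unfolding tensor_form_def by (simp add: sum_distrib_left prod.distrib algebra_simps)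

lemma tensor_form_change_basis:
  "tensor_form n d T (\<lambda>j i. \<Sum>k<m. A j k * E k i)
     = tensor_form m d (\<lambda>ks. tensor_form n d T (\<lambda>j. E (ks ! j))) A"
proof -
  have "tensor_form n d T (\<lambda>j i. \<Sum>k<m. A j k * E k i)
      = (\<Sum>xs\<in>idx n d. T xs * (\<Sum>ks\<in>idx m d. \<Prod>j<d. A j (ks ! j) * E (ks ! j) (xs ! j)))"
    unfolding tensor_form_def by (simp add: sum_idx_prod[symmetric])
  also have "\<dots> = (\<Sum>ks\<in>idx m d. \<Sum>xs\<in>idx n d.
                     (\<Prod>j<d. A j (ks ! j)) * (T xs * (\<Prod>j<d. E (ks ! j) (xs ! j))))"
    by (subst sum.swap) (simp add: sum_distrib_left prod.distrib algebra_simps)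
  also have "\<dots> = tensor_form m d (\<lambda>ks. tensor_form n d T (\<lambda>j. E (ks ! j))) A"
    unfolding tensor_form_def by (simp add: sum_distrib_left algebra_simps)
  finally show ?thesis .
qed

lemma tensor_form_Suc: "tensor_form n (Suc d) T x = tensor_form n d (contract n T (x d)) x"
proof -
  have "tensor_form n (Suc d) T x
      = (\<Sum>zs\<in>idx n d. \<Sum>i<n. T (zs @ [i]) * ((\<Prod>j<d. x j (zs ! j)) * x d i))"
    unfolding tensor_form_def sum_idx_Suc
    by (intro sum.cong refl arg_cong[where f = "\<lambda>a. _ * a"] prod_lessThan_Suc_append)
      (simp add: idx_def)
  then show ?thesis
    unfolding tensor_form_def contract_def by (simp add: sum_distrib_left sum_distrib_right mult_ac)
qed

lemma tnorm_sq: "(tnorm n d T)\<^sup>2 = (\<Sum>xs\<in>idx n d. (T xs)\<^sup>2)"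
  by (simp add: tnorm_def sum_nonneg)

lemma tnorm_le_iff_sq: "tnorm n d A \<le> tnorm n d B \<longleftrightarrow> (tnorm n d A)\<^sup>2 \<le> (tnorm n d B)\<^sup>2"
  by (simp add: tnorm_def sum_nonneg)

lemma tnorm_diff_rank_one_sq:
  assumes "\<forall>j<d. unit_vec n (x j)"
  shows "(tnorm n d (\<lambda>xs. T xs - rank_one d s x xs))\<^sup>2
           = (tnorm n d T)\<^sup>2 - 2 * s * tensor_form n d T x + s\<^sup>2"
proof -
  have "(\<Sum>xs\<in>idx n d. (\<Prod>j<d. x j (xs ! j))\<^sup>2) = (\<Sum>xs\<in>idx n d. \<Prod>j<d. (x j (xs ! j))\<^sup>2)"
    by (simp add: prod_power_distrib)
  also have "\<dots> = (\<Prod>j<d. \<Sum>i<n. (x j i)\<^sup>2)"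
    by (rule sum_idx_prod)
  also have "\<dots> = 1" using assms by (simp add: unit_vec_def)
  finally have rank_one_sq: "(\<Sum>xs\<in>idx n d. (\<Prod>j<d. x j (xs ! j))\<^sup>2) = 1" .
  have "(\<Sum>xs\<in>idx n d. (T xs - rank_one d s x xs)\<^sup>2)
      = (\<Sum>xs\<in>idx n d. (T xs)\<^sup>2 - 2 * s * (T xs * (\<Prod>j<d. x j (xs ! j)))
                        + s\<^sup>2 * (\<Prod>j<d. x j (xs ! j))\<^sup>2)"
    unfolding rank_one_def by (intro sum.cong refl) (simp add: power2_eq_square algebra_simps)
  then show ?thesis
    by (simp add: tnorm_sq tensor_form_def rank_one_sq sum.distrib sum_subtractf
        sum_distrib_left[symmetric])
qed

lemma best_rank_one_tensor_form_le:
  assumes "best_rank_one n d T a u" "\<forall>j<d. unit_vec n (x j)"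
  shows "(tensor_form n d T x)\<^sup>2 \<le> (tensor_form n d T u)\<^sup>2"
proof -
  have "\<forall>j<d. unit_vec n (u j)" using assms(1) by (simp add: best_rank_one_def)
  moreover have "(tnorm n d (\<lambda>xs. T xs - rank_one d a u xs))\<^sup>2
      \<le> (tnorm n d (\<lambda>xs. T xs - rank_one d (tensor_form n d T x) x xs))\<^sup>2"
    using assms by (simp add: best_rank_one_def flip: tnorm_le_iff_sq)
  ultimately have "- 2 * a * tensor_form n d T u + a\<^sup>2 \<le> - (tensor_form n d T x)\<^sup>2"
    using tnorm_diff_rank_one_sq[OF assms(2)] tnorm_diff_rank_one_sq[of d n u]
    by (simp add: power2_eq_square)
  moreover have "0 \<le> (a - tensor_form n d T u)\<^sup>2" by simp
  ultimately show ?thesis by (simp add: power2_eq_square algebra_simps)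
qed

lemma has_sym_best_rank_one_if_max:
  assumes "unit_vec n v"
    and "\<And>x. \<forall>j<d. unit_vec n (x j) \<Longrightarrow> (tensor_form n d T x)\<^sup>2 \<le> (tensor_form n d T (\<lambda>_. v))\<^sup>2"
  shows "has_sym_best_rank_one n d T"
  unfolding has_sym_best_rank_one_def best_rank_one_def
proof (intro exI conjI allI impI)
  fix s x assume x: "\<forall>j<d. unit_vec n (x j)"
  let ?b = "tensor_form n d T (\<lambda>_. v)" and ?f = "tensor_form n d T x"
  have "?f\<^sup>2 \<le> ?b\<^sup>2" using assms(2) x .
  moreover have "2 * s * ?f \<le> s\<^sup>2 + ?f\<^sup>2"
    using power2_diff[of s ?f] zero_le_power2[of "s - ?f"] by linarith
  moreover have "(tnorm n d (\<lambda>xs. T xs - rank_one d ?b (\<lambda>_. v) xs))\<^sup>2 = (tnorm n d T)\<^sup>2 - ?b\<^sup>2"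
    using tnorm_diff_rank_one_sq[of d n "\<lambda>_. v"] assms(1) by (simp add: power2_eq_square)
  ultimately have "(tnorm n d (\<lambda>xs. T xs - rank_one d ?b (\<lambda>_. v) xs))\<^sup>2
      \<le> (tnorm n d (\<lambda>xs. T xs - rank_one d s x xs))\<^sup>2"
    using tnorm_diff_rank_one_sq[OF x, of T s] by linarith
  then show "tnorm n d (\<lambda>xs. T xs - rank_one d ?b (\<lambda>_. v) xs)
      \<le> tnorm n d (\<lambda>xs. T xs - rank_one d s x xs)"
    by (simp add: tnorm_le_iff_sq)
qed (use assms(1) in auto)

lemma permute_list_idx: "p permutes {..<d} \<Longrightarrow> xs \<in> idx n d \<Longrightarrow> permute_list p xs \<in> idx n d"
  by (simp add: idx_def)

lemma sym_tensor_form_symmetric: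
  assumes "sym_tensor n d T"
  shows "form_symmetric n d T"
  unfolding form_symmetric_def
proof (intro allI impI)
  fix x :: "nat \<Rightarrow> nat \<Rightarrow> real" and p assume p: "p permutes {..<d}"
  have ip: "inv p permutes {..<d}" using p by (rule permutes_inv)
  let ?G = "\<lambda>ys. T ys * (\<Prod>j<d. x j (ys ! j))"
  have "T xs * (\<Prod>j<d. (x \<circ> p) j (xs ! j)) = ?G (permute_list (inv p) xs)"
    if xs: "xs \<in> idx n d" for xs
  proof -
    have l: "length xs = d" using xs by (simp add: idx_def)
    have "(\<Prod>j<d. (x \<circ> p) j (xs ! j)) = (\<Prod>j<d. x (p j) (xs ! inv p (p j)))"
      by (intro prod.cong) (auto simp: permutes_inverses(2)[OF p])
    also have "\<dots> = (\<Prod>j<d. x j (xs ! inv p j))"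
      using prod.permute[OF p, of "\<lambda>j. x j (xs ! inv p j)"] by (simp add: comp_def)
    also have "\<dots> = (\<Prod>j<d. x j (permute_list (inv p) xs ! j))"
      by (intro prod.cong) (auto simp: permute_list_nth l ip)
    finally show ?thesis
      using assms xs ip by (simp add: sym_tensor_def)
  qed
  then have "tensor_form n d T (x \<circ> p) = (\<Sum>xs\<in>idx n d. ?G (permute_list (inv p) xs))"
    unfolding tensor_form_def by simp
  also have "\<dots> = (\<Sum>ys\<in>idx n d. ?G ys)"
  proof (rule sum.reindex_bij_witness[where j = "permute_list (inv p)" and i = "permute_list p"])
    fix a assume a: "a \<in> idx n d"
    then have l: "length a = d" by (simp add: idx_def)
    show "permute_list p (permute_list (inv p) a) = a"
      using permute_list_compose[of p a "inv p"] p l permutes_inv_o(2)[OF p] by simp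
    show "permute_list (inv p) (permute_list p a) = a"
      using permute_list_compose[of "inv p" a p] ip l permutes_inv_o(1)[OF p] by simp
  qed (use p ip permute_list_idx in auto)
  finally show "tensor_form n d T (x \<circ> p) = tensor_form n d T x" by (simp add: tensor_form_def)
qed

lemma form_symmetric_contract:
  assumes "form_symmetric n (Suc d) T"
  shows "form_symmetric n d (contract n T y)"
  unfolding form_symmetric_def
proof (intro allI impI)
  fix x :: "nat \<Rightarrow> nat \<Rightarrow> real" and p assume p: "p permutes {..<d}"
  have p': "p permutes {..<Suc d}" using p by (rule permutes_subset) auto
  have "p d = d" using p by (simp add: permutes_def)
  moreover have "p j \<noteq> d" if "j < d" for j using permutes_in_image[OF p, of j] that by auto
  ultimately have "tensor_form n d (contract n T y) (x \<circ> p)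
      = tensor_form n (Suc d) T ((x(d := y)) \<circ> p)"
    by (simp add: tensor_form_Suc cong: tensor_form_cong)
  also have "\<dots> = tensor_form n (Suc d) T (x(d := y))"
    using assms p' by (simp add: form_symmetric_def)
  also have "\<dots> = tensor_form n d (contract n T y) x"
    by (simp add: tensor_form_Suc cong: tensor_form_cong)
  finally show "tensor_form n d (contract n T y) (x \<circ> p) = tensor_form n d (contract n T y) x" .
qed

lemma unit_vec_2: "unit_vec 2 f \<longleftrightarrow> (f 0)\<^sup>2 + (f 1)\<^sup>2 = 1"
  by (simp add: unit_vec_def numeral_2_eq_2)

lemma sum_lessThan_2: "(\<Sum>k<(2::nat). g k) = g 0 + (g 1 :: real)"
  by (simp add: numeral_2_eq_2)

lemma unit_vec_lincomb:
  assumes "unit_vec n e\<^sub>0" "unit_vec n e\<^sub>1" "(\<Sum>i<n. e\<^sub>0 i * e\<^sub>1 i) = 0" "a\<^sup>2 + b\<^sup>2 = 1"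
  shows "unit_vec n (\<lambda>i. a * e\<^sub>0 i + b * e\<^sub>1 i)"
proof -
  have "(\<Sum>i<n. (a * e\<^sub>0 i + b * e\<^sub>1 i)\<^sup>2)
      = a\<^sup>2 * (\<Sum>i<n. (e\<^sub>0 i)\<^sup>2) + b\<^sup>2 * (\<Sum>i<n. (e\<^sub>1 i)\<^sup>2) + 2 * a * b * (\<Sum>i<n. e\<^sub>0 i * e\<^sub>1 i)"
    by (simp add: power2_eq_square algebra_simps sum.distrib sum_distrib_left)
  then show ?thesis using assms by (simp add: unit_vec_def)
qed

lemma unit_vec_decomposition:
  assumes w: "unit_vec n w" and y: "unit_vec n y"
  obtains (parallel) c where "c\<^sup>2 = 1" "\<forall>i<n. y i = c * w i"
  | (orthogonal) c s e where "unit_vec n e" "(\<Sum>i<n. w i * e i) = 0" "c\<^sup>2 + s\<^sup>2 = 1"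
      "\<forall>i<n. y i = c * w i + s * e i"
proof -
  define c where "c = (\<Sum>i<n. y i * w i)"
  define r where "r = (\<lambda>i. y i - c * w i)"
  define \<rho> where "\<rho> = (\<Sum>i<n. (r i)\<^sup>2)"
  have "\<rho> = (\<Sum>i<n. (y i)\<^sup>2) - 2 * c * (\<Sum>i<n. y i * w i) + c\<^sup>2 * (\<Sum>i<n. (w i)\<^sup>2)"
    unfolding \<rho>_def r_def
    by (simp add: power2_eq_square algebra_simps sum.distrib sum_subtractf sum_distrib_left)
  then have \<rho>: "\<rho> = 1 - c\<^sup>2" using w y by (simp add: unit_vec_def power2_eq_square flip: c_def)
  have "(\<Sum>i<n. w i * r i) = (\<Sum>i<n. y i * w i) - c * (\<Sum>i<n. (w i)\<^sup>2)"
    unfolding r_def by (simp add: algebra_simps sum_subtractf sum_distrib_left power2_eq_square)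
  then have orth: "(\<Sum>i<n. w i * r i) = 0" using w by (simp add: unit_vec_def c_def)
  show thesis
  proof (cases "\<rho> = 0")
    case True
    then have "\<forall>i<n. r i = 0"
      using sum_nonneg_eq_0_iff[of "{..<n}" "\<lambda>i. (r i)\<^sup>2"] by (simp add: \<rho>_def)
    with True \<rho> show thesis by (intro parallel[of c]) (auto simp: r_def)
  next
    case False
    then have "\<rho> > 0" unfolding \<rho>_def by (simp add: order_le_neq_trans sum_nonneg)
    then have s: "sqrt \<rho> > 0" "(sqrt \<rho>)\<^sup>2 = \<rho>" by auto
    show thesis
    proof (rule orthogonal[of "\<lambda>i. r i / sqrt \<rho>" c "sqrt \<rho>"])
      show "unit_vec n (\<lambda>i. r i / sqrt \<rho>)"
        using s by (simp add: unit_vec_def power_divide flip: sum_divide_distrib \<rho>_def)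
      show "(\<Sum>i<n. w i * (r i / sqrt \<rho>)) = 0"
        using orth by (simp flip: sum_divide_distrib)
      show "c\<^sup>2 + (sqrt \<rho>)\<^sup>2 = 1" using s \<rho> by simp
      show "\<forall>i<n. y i = c * w i + sqrt \<rho> * (r i / sqrt \<rho>)" using s by (simp add: r_def)
    qed
  qed
qed

lemma tensor_form_le_diagonal_on_plane:
  assumes hyp: "\<forall>S. sym_tensor 2 d S \<longrightarrow> has_sym_best_rank_one 2 d S"
    and sym: "form_symmetric n d T"
    and E\<^sub>0: "unit_vec n E\<^sub>0" and E\<^sub>1: "unit_vec n E\<^sub>1" and orth: "(\<Sum>i<n. E\<^sub>0 i * E\<^sub>1 i) = 0"
    and A: "\<forall>j<d. unit_vec 2 ((A :: nat \<Rightarrow> nat \<Rightarrow> real) j)"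
  shows "\<exists>v. unit_vec n v \<and>
           (tensor_form n d T (\<lambda>j i. A j 0 * E\<^sub>0 i + A j 1 * E\<^sub>1 i))\<^sup>2 \<le> (tensor_form n d T (\<lambda>_. v))\<^sup>2"
proof -
  define E where "E = (\<lambda>k::nat. if k = 0 then E\<^sub>0 else E\<^sub>1)"
  define S where "S = (\<lambda>ks. tensor_form n d T (\<lambda>j. E (ks ! j)))"
  have restrict: "tensor_form n d T (\<lambda>j i. \<Sum>k<2. B j k * E k i) = tensor_form 2 d S B" for B
    unfolding S_def by (rule tensor_form_change_basis)
  have "sym_tensor 2 d S"
    unfolding sym_tensor_def
  proof (intro ballI allI impI)
    fix ks p assume ks: "ks \<in> idx 2 d" and p: "p permutes {..<d}"
    have "S (permute_list p ks) = tensor_form n d T ((\<lambda>j. E (ks ! j)) \<circ> p)"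
      unfolding S_def using ks p by (intro tensor_form_cong) (simp add: permute_list_nth idx_def)
    also have "\<dots> = S ks" using sym p by (simp add: form_symmetric_def S_def)
    finally show "S (permute_list p ks) = S ks" .
  qed
  with hyp obtain b u where u: "unit_vec 2 u" and best: "best_rank_one 2 d S b (\<lambda>_. u)"
    by (auto simp: has_sym_best_rank_one_def)
  have "(tensor_form 2 d S A)\<^sup>2 \<le> (tensor_form 2 d S (\<lambda>_. u))\<^sup>2"
    using best_rank_one_tensor_form_le[OF best] A by simp
  moreover have "unit_vec n (\<lambda>i. u 0 * E\<^sub>0 i + u 1 * E\<^sub>1 i)"
    using unit_vec_lincomb[OF E\<^sub>0 E\<^sub>1 orth] u by (simp add: unit_vec_2)
  ultimately show ?thesis
    using restrict[of A] restrict[of "\<lambda>_. u"] by (intro exI[of _ "\<lambda>i. u 0 * E\<^sub>0 i + u 1 * E\<^sub>1 i"])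
      (simp add: sum_lessThan_2 E_def)
qed

lemma tensor_form_le_diagonal_two_values:
  assumes hyp: "\<forall>S. sym_tensor 2 d S \<longrightarrow> has_sym_best_rank_one 2 d S"
    and sym: "form_symmetric n d T" and w: "unit_vec n w" and y: "unit_vec n y"
    and x: "\<forall>j<d. x j = w \<or> x j = y"
  shows "\<exists>v. unit_vec n v \<and> (tensor_form n d T x)\<^sup>2 \<le> (tensor_form n d T (\<lambda>_. v))\<^sup>2"
  using w y
proof (cases rule: unit_vec_decomposition)
  case (parallel c)
  define a where "a = (\<lambda>j. if x j = w then 1 else c)"
  have "tensor_form n d T x = tensor_form n d T (\<lambda>j i. a j * w i)"
    using x parallel by (intro tensor_form_cong) (auto simp: a_def)
  also have "\<dots> = (\<Prod>j<d. a j) * tensor_form n d T (\<lambda>_. w)"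
    by (rule tensor_form_scale)
  finally have "(tensor_form n d T x)\<^sup>2 = (\<Prod>j<d. (a j)\<^sup>2) * (tensor_form n d T (\<lambda>_. w))\<^sup>2"
    by (simp add: power_mult_distrib prod_power_distrib)
  also have "(\<Prod>j<d. (a j)\<^sup>2) = 1" using parallel by (intro prod.neutral) (simp add: a_def)
  finally show ?thesis using w by auto
next
  case (orthogonal c s e)
  define A where "A = (\<lambda>j (k :: nat). if x j = w then (if k = 0 then 1 else 0) else (if k = 0 then c else s))"
  have "tensor_form n d T x = tensor_form n d T (\<lambda>j i. A j 0 * w i + A j 1 * e i)"
    using x orthogonal by (intro tensor_form_cong) (auto simp: A_def)
  moreover have "\<forall>j<d. unit_vec 2 (A j)" using orthogonal by (simp add: A_def unit_vec_2)
  ultimately show ?thesis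
    using tensor_form_le_diagonal_on_plane[OF hyp sym w orthogonal(1,2)] by simp
qed

lemma tensor_form_le_diagonal:
  assumes hyp: "\<forall>d. 2 \<le> d \<and> d \<le> k \<longrightarrow> (\<forall>S. sym_tensor 2 d S \<longrightarrow> has_sym_best_rank_one 2 d S)"
  shows "1 \<le> d \<Longrightarrow> d \<le> k \<Longrightarrow> form_symmetric n d T \<Longrightarrow> \<forall>j<d. unit_vec n (x j) \<Longrightarrow>
    \<exists>v. unit_vec n v \<and> (tensor_form n d T x)\<^sup>2 \<le> (tensor_form n d T (\<lambda>_. v))\<^sup>2"
proof (induction d arbitrary: T x)
  case 0
  then show ?case by simp
next
  case (Suc d)
  show ?case
  proof (cases "d = 0")
    case True
    then have "tensor_form n (Suc d) T x = tensor_form n (Suc d) T (\<lambda>_. x 0)"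
      by (intro tensor_form_cong) simp
    with Suc.prems show ?thesis by auto
  next
    case False
    let ?C = "contract n T (x d)"
    have "form_symmetric n d ?C" using Suc.prems(3) by (rule form_symmetric_contract)
    then obtain w where w: "unit_vec n w"
      and w_le: "(tensor_form n d ?C x)\<^sup>2 \<le> (tensor_form n d ?C (\<lambda>_. w))\<^sup>2"
      using Suc.IH[of ?C x] Suc.prems False by auto
    let ?X = "\<lambda>j. if j < d then w else x d"
    have X: "tensor_form n d ?C (\<lambda>_. w) = tensor_form n (Suc d) T ?X"
      by (simp add: tensor_form_Suc cong: tensor_form_cong)
    have "\<forall>S. sym_tensor 2 (Suc d) S \<longrightarrow> has_sym_best_rank_one 2 (Suc d) S"
      using hyp False Suc.prems(2) by auto
    then have "\<exists>v. unit_vec n v \<and>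
        (tensor_form n (Suc d) T ?X)\<^sup>2 \<le> (tensor_form n (Suc d) T (\<lambda>_. v))\<^sup>2"
      by (rule tensor_form_le_diagonal_two_values[OF _ Suc.prems(3) w, where y = "x d"])
        (use Suc.prems(4) in simp_all)
    with w_le X show ?thesis by (auto simp: tensor_form_Suc)
  qed
qed

lemma compactin_unit_sphere:
  fixes n :: nat
  shows "compactin (product_topology (\<lambda>_. euclideanreal) {..<n})
     {u \<in> topspace (product_topology (\<lambda>_. euclideanreal) {..<n}). (\<Sum>i<n. (u i)\<^sup>2) = 1}"
  (is "compactin ?X ?K")
proof (rule closed_compactin)
  show "compactin ?X (PiE {..<n} (\<lambda>_. {-1..1}))" by (simp add: compactin_PiE)
  have "continuous_map ?X euclideanreal (\<lambda>u. \<Sum>i<n. (u i)\<^sup>2)"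
    by (intro continuous_map_sum continuous_map_real_pow continuous_map_product_projection) auto
  then show "closedin ?X ?K"
    using closedin_continuous_map_preimage[of ?X euclideanreal _ "{1}"] by simp
  show "?K \<subseteq> PiE {..<n} (\<lambda>_. {-1..1})"
  proof
    fix u assume u: "u \<in> ?K"
    have "\<bar>u i\<bar> \<le> 1" if "i < n" for i
    proof -
      have "(u i)\<^sup>2 \<le> (\<Sum>i<n. (u i)\<^sup>2)"
        using member_le_sum[of i "{..<n}" "\<lambda>i. (u i)\<^sup>2"] that by simp
      then show ?thesis using u by (simp add: abs_square_le_1)
    qed
    with u show "u \<in> PiE {..<n} (\<lambda>_. {-1..1})" by (auto simp: PiE_def abs_le_iff)
  qed
qed

lemma continuous_attains_max_on_unit_sphere:
  fixes F :: "(nat \<Rightarrow> real) \<Rightarrow> real"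
  assumes cont: "continuous_map (product_topology (\<lambda>_. euclideanreal) {..<n}) euclideanreal F"
    and local: "\<And>u. F u = F (restrict u {..<n})" and "n \<ge> 1"
  obtains v where "unit_vec n v" "\<And>u. unit_vec n u \<Longrightarrow> F u \<le> F v"
proof -
  let ?K = "{u \<in> topspace (product_topology (\<lambda>_. euclideanreal) {..<n}). (\<Sum>i<n. (u i)\<^sup>2) = 1}"
  have K: "restrict u {..<n} \<in> ?K" if "unit_vec n u" for u
    using that by (simp add: unit_vec_def)
  have "compact (F ` ?K)" using image_compactin[OF compactin_unit_sphere cont] by simp
  moreover have "restrict (\<lambda>i. if i = 0 then 1 else 0) {..<n} \<in> ?K"
    using assms(3) K[of "\<lambda>i. if i = 0 then 1 else 0"]
    by (simp add: unit_vec_def if_distrib[of "\<lambda>x. x\<^sup>2"] cong: if_cong)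
  ultimately obtain v where v: "v \<in> ?K" "\<forall>u\<in>?K. F u \<le> F v"
    using compact_attains_sup[of "F ` ?K"] by blast
  show thesis
  proof (rule that)
    show "unit_vec n v" using v by (simp add: unit_vec_def)
    show "F u \<le> F v" if "unit_vec n u" for u using v K[OF that] local[of u] by simp
  qed
qed

lemma continuous_map_tensor_form_diagonal:
  "continuous_map (product_topology (\<lambda>_. euclideanreal) {..<n}) euclideanreal
     (\<lambda>v. (tensor_form n d T (\<lambda>_. v))\<^sup>2)"
  unfolding tensor_form_def
  by (intro continuous_map_real_pow continuous_map_sum continuous_map_real_mult
      continuous_map_prod continuous_map_product_projection continuous_map_const[THEN iffD2])
    (auto dest: idx_nth_less)

theorem lemma3p7:
  fixes k :: nat
  assumes "k \<ge> 2"
    and "\<forall>d. 2 \<le> d \<and> d \<le> k \<longrightarrow>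
           (\<forall>T. sym_tensor 2 d T \<longrightarrow> has_sym_best_rank_one 2 d T)"
  shows "\<forall>n d T. 3 \<le> n \<and> 2 \<le> d \<and> d \<le> k \<and> sym_tensor n d T \<longrightarrow>
           has_sym_best_rank_one n d T"
proof (intro allI impI)
  fix n d T assume h: "3 \<le> n \<and> 2 \<le> d \<and> d \<le> k \<and> sym_tensor n d T"
  have local: "(tensor_form n d T (\<lambda>_. u))\<^sup>2 = (tensor_form n d T (\<lambda>_. restrict u {..<n}))\<^sup>2"
    for u by (auto cong: tensor_form_cong)
  have "n \<ge> 1" using h by simp
  then obtain v where v: "unit_vec n v"
    and max: "\<And>u. unit_vec n u \<Longrightarrow> (tensor_form n d T (\<lambda>_. u))\<^sup>2 \<le> (tensor_form n d T (\<lambda>_. v))\<^sup>2"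
    using continuous_attains_max_on_unit_sphere[OF continuous_map_tensor_form_diagonal local] by blast
  show "has_sym_best_rank_one n d T"
  proof (rule has_sym_best_rank_one_if_max[OF v])
    fix x assume "\<forall>j<d. unit_vec n (x j)"
    with h obtain u where "unit_vec n u" "(tensor_form n d T x)\<^sup>2 \<le> (tensor_form n d T (\<lambda>_. u))\<^sup>2"
      using tensor_form_le_diagonal[OF assms(2), of d n T x] sym_tensor_form_symmetric by auto
    with max show "(tensor_form n d T x)\<^sup>2 \<le> (tensor_form n d T (\<lambda>_. v))\<^sup>2" by fastforce
  qed
qed

end
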